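(* Let $n,k$ be integers with $1\le k\le n-2$, let $b_1\ge\dots\ge b_n\ge 0$ be any included bid profile with $b_{k+1}>0$, and let $\alpha\in(0,1)$. The R$^2$-TFRM mechanism described in the context has expected redistribution fraction (expectation over the randomization) $f^*=\alpha\cdot\frac{k}{n}$. Moreover it is allocatively efficient, restricted user incentive compatible in expectation, individually rational for users, and it is individually rational for the miner in expectation whenever $$\alpha\le\frac{n}{k+(n-k)\,b_k/b_{k+1}}.$$
   Context: Setting: transactions in a mempool belong to distinct users $i$ with valuation $\theta_i\ge0$ and bid $b_i\ge0$. The block includes the $n$ highest bids, ordered $b_1\ge\dots\ge b_n$, and confirms the top $k$ ($k\le n-2$). Let $r_i=\frac{k}{n}b_{k+1}$ for $i\le k$ and $r_j=\frac{k}{n}b_k$ for $j\in\{k+1,\dots,n\}$ (the R-TFRM rebate, i.e. $k/n$ times the $k$-th highest bid among the other included users). In R$^2$-TFRM, using trusted randomness not controlled by the miner, independently for each included user a rebate is granted with probability $\alpha$: a confirmed user $i$ pays $b_{k+1}-r_i$ with probability $\alpha$ and $b_{k+1}$ with probability $1-\alpha$; an included unconfirmed user $j$ pays $-r_j$ with probability $\alpha$ and $0$ with probability $1-\alpha$. The miner receives the sum of payments. User utility: $u_i=\mathbb{1}[i\text{ confirmed}]\,\theta_i-p_i$. Allocative efficiency: the confirmed transactions maximize total valuation. Restricted UIC in expectation: for every included user, bidding $\theta_i$ maximizes its expected utility whatever the other included users bid. IR for users: every included user's utility is nonnegative under truthful bidding. IR for the miner in expectation: the total payment $k\,b_{k+1}$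 is at least the expected total rebate. The redistribution fraction is the fraction of the VCG payment $k\,b_{k+1}$ returned to the $k$ confirmed users in the worst case. *)

theory Defs
  imports "HOL-Probability.Probability"
begin

text \<open>The n included users are indexed by 1..n; a bid profile is
  b :: nat => real (only the values on 1..n matter).  The trusted randomness is a
  vector of independent coins c :: nat => bool, c i = True meaning that user i is
  granted its rebate (probability alpha).\<close>

definition users :: "nat \<Rightarrow> nat set" where
  "users n = {1..n}"

definition kth_highest :: "nat \<Rightarrow> nat set \<Rightarrow> (nat \<Rightarrow> real) \<Rightarrow> real" where
  "kth_highest m A b = rev (sort (map b (sorted_list_of_set A))) ! (m - 1)"

text \<open>Confirmed users: the k highest bids, ties broken in favour of the smaller index.
  For a sorted profile b 1 >= ... >= b n this is exactly {1..k}.\<close>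
definition confirmed :: "nat \<Rightarrow> nat \<Rightarrow> (nat \<Rightarrow> real) \<Rightarrow> nat set" where
  "confirmed n k b = {i \<in> users n.
      card {j \<in> users n. b j > b i \<or> (b j = b i \<and> j < i)} < k}"

definition vcg_price :: "nat \<Rightarrow> nat \<Rightarrow> (nat \<Rightarrow> real) \<Rightarrow> real" where
  "vcg_price n k b = kth_highest (k + 1) (users n) b"

definition rtfrm_rebate :: "nat \<Rightarrow> nat \<Rightarrow> (nat \<Rightarrow> real) \<Rightarrow> nat \<Rightarrow> real" where
  "rtfrm_rebate n k b i = real k / real n * kth_highest k (users n - {i}) b"

definition rebate :: "nat \<Rightarrow> nat \<Rightarrow> (nat \<Rightarrow> real) \<Rightarrow> (nat \<Rightarrow> bool) \<Rightarrow> nat \<Rightarrow> real" where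
  "rebate n k b c i = (if c i then rtfrm_rebate n k b i else 0)"

definition payment :: "nat \<Rightarrow> nat \<Rightarrow> (nat \<Rightarrow> real) \<Rightarrow> (nat \<Rightarrow> bool) \<Rightarrow> nat \<Rightarrow> real" where
  "payment n k b c i =
     (if i \<in> confirmed n k b then vcg_price n k b else 0) - rebate n k b c i"

definition utility :: "nat \<Rightarrow> nat \<Rightarrow> (nat \<Rightarrow> real) \<Rightarrow> (nat \<Rightarrow> real) \<Rightarrow> (nat \<Rightarrow> bool) \<Rightarrow> nat \<Rightarrow> real" where
  "utility n k \<theta> b c i = (if i \<in> confirmed n k b then \<theta> i else 0) - payment n k b c i"

definition coins :: "nat \<Rightarrow> real \<Rightarrow> (nat \<Rightarrow> bool) pmf" where
  "coins n \<alpha> = Pi_pmf (users n) False (\<lambda>_. bernoulli_pmf \<alpha>)"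

definition expected_utility :: "nat \<Rightarrow> nat \<Rightarrow> real \<Rightarrow> (nat \<Rightarrow> real) \<Rightarrow> (nat \<Rightarrow> real) \<Rightarrow> nat \<Rightarrow> real" where
  "expected_utility n k \<alpha> \<theta> b i =
     measure_pmf.expectation (coins n \<alpha>) (\<lambda>c. utility n k \<theta> b c i)"

definition miner_revenue :: "nat \<Rightarrow> nat \<Rightarrow> (nat \<Rightarrow> real) \<Rightarrow> (nat \<Rightarrow> bool) \<Rightarrow> real" where
  "miner_revenue n k b c = (\<Sum>i\<in>users n. payment n k b c i)"

definition nonneg_profile :: "nat \<Rightarrow> (nat \<Rightarrow> real) \<Rightarrow> bool" where
  "nonneg_profile n b \<longleftrightarrow> (\<forall>i\<in>users n. 0 \<le> b i)"

definition allocatively_efficient :: "nat \<Rightarrow> nat \<Rightarrow> bool" where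
  "allocatively_efficient n k \<longleftrightarrow>
     (\<forall>\<theta>. nonneg_profile n \<theta> \<longrightarrow>
        (\<forall>S. S \<subseteq> users n \<longrightarrow> card S \<le> k \<longrightarrow>
           (\<Sum>i\<in>S. \<theta> i) \<le> (\<Sum>i\<in>confirmed n k \<theta>. \<theta> i)))"

definition restricted_UIC_exp :: "nat \<Rightarrow> nat \<Rightarrow> real \<Rightarrow> bool" where
  "restricted_UIC_exp n k \<alpha> \<longleftrightarrow>
     (\<forall>\<theta> b i b'. i \<in> users n \<longrightarrow> 0 \<le> \<theta> i \<longrightarrow> nonneg_profile n b \<longrightarrow> 0 \<le> b' \<longrightarrow>
        expected_utility n k \<alpha> \<theta> (b(i := b')) i \<le> expected_utility n k \<alpha> \<theta> (b(i := \<theta> i)) i)"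

definition IR_users :: "nat \<Rightarrow> nat \<Rightarrow> bool" where
  "IR_users n k \<longleftrightarrow>
     (\<forall>\<theta> c i. nonneg_profile n \<theta> \<longrightarrow> i \<in> users n \<longrightarrow> 0 \<le> utility n k \<theta> \<theta> c i)"

definition IR_miner_exp :: "nat \<Rightarrow> nat \<Rightarrow> real \<Rightarrow> (nat \<Rightarrow> real) \<Rightarrow> bool" where
  "IR_miner_exp n k \<alpha> b \<longleftrightarrow>
     measure_pmf.expectation (coins n \<alpha>) (\<lambda>c. \<Sum>i\<in>users n. rebate n k b c i)
       \<le> real k * vcg_price n k b"

definition expected_redistribution_fraction :: "nat \<Rightarrow> nat \<Rightarrow> real \<Rightarrow> (nat \<Rightarrow> real) \<Rightarrow> real" where
  "expected_redistribution_fraction n k \<alpha> b =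
     measure_pmf.expectation (coins n \<alpha>) (\<lambda>c. \<Sum>i\<in>confirmed n k b. rebate n k b c i)
       / (real k * vcg_price n k b)"

end

theory Submission
  imports Defs
begin

(* Everything a user i can influence is governed by its critical bid p, the k-th highest bid
   among the other included users: i is confirmed only if b_i >= p and unconfirmed only if
   b_i <= p, and a confirmed user pays exactly p. Since p, and with it the R-TFRM rebate (k/n) p,
   does not depend on i's own bid, i's expected utility is the allocation gain (theta_i - p or 0)
   plus the constant alpha (k/n) p, and truthful bidding secures the larger gain; this gives UIC
   and IR for users. Efficiency holds because confirmation ranks the users by bid. On a sorted
   profile the critical bids are b_(k+1) for the k confirmed users and b_k for the n - k others,
   so the expected rebates are alpha (k/n) k b_(k+1) to the confirmed users and
   alpha (k/n) (k b_(k+1) + (n - k) b_k) in total, which yields the redistribution fraction and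
   the miner's IR condition. *)

lemma length_filter_sorted_values:
  assumes "finite A"
  shows "length (filter P (rev (sort (map b (sorted_list_of_set A))))) = card {j\<in>A. P (b j)}"
proof -
  have "length (filter P (rev (sort (map b (sorted_list_of_set A))))) =
        size (filter_mset P (mset (map b (sorted_list_of_set A))))"
    by (metis mset_filter mset_rev mset_sort size_mset)
  also have "\<dots> = length (filter (P \<circ> b) (sorted_list_of_set A))"
    by (metis filter_map length_map mset_filter size_mset)
  also have "\<dots> = card {j\<in>A. P (b j)}"
    using assms by (subst distinct_length_filter) (auto intro!: arg_cong[where f=card])
  finally show ?thesis .
qed

lemma kth_highest_in_image:
  assumes "finite A" "1 \<le> m" "m \<le> card A"
  shows "kth_highest m A b \<in> b ` A"
proof -
  have "kth_highest m A b \<in> set (rev (sort (map b (sorted_list_of_set A))))"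
    unfolding kth_highest_def using assms by (intro nth_mem) simp
  then show ?thesis using assms(1) by simp
qed

lemma kth_highest_card_bounds:
  assumes "finite A" "1 \<le> m" "m \<le> card A"
  shows "card {j\<in>A. b j > kth_highest m A b} < m"
    and "m \<le> card {j\<in>A. b j \<ge> kth_highest m A b}"
proof -
  define L where "L = rev (sort (map b (sorted_list_of_set A)))"
  define v where "v = kth_highest m A b"
  have v: "v = L ! (m - 1)" unfolding v_def L_def kth_highest_def ..
  have length_L: "length L = card A" unfolding L_def using assms(1) by simp
  have L_antimono: "L ! l \<le> L ! j" if "j \<le> l" "l < length L" for j l
    using that unfolding L_def by (simp add: rev_nth sorted_nth_mono)
  have "card {j\<in>A. b j > v} = card {j. j < length L \<and> L ! j > v}"
    unfolding L_def length_filter_sorted_values[OF assms(1), symmetric]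
    by (rule length_filter_conv_card)
  also have "\<dots> \<le> card {..<m-1}"
    using L_antimono[of "m-1"] v by (intro card_mono) (auto simp: not_less[symmetric])
  finally show "card {j\<in>A. b j > v} < m" using assms(2) by simp
  have "card {..<m} \<le> card {j. j < length L \<and> L ! j \<ge> v}"
    using L_antimono[of _ "m-1"] v length_L assms(2,3) by (intro card_mono) auto
  also have "\<dots> = card {j\<in>A. b j \<ge> v}"
    unfolding L_def length_filter_sorted_values[OF assms(1), symmetric]
    by (rule length_filter_conv_card[symmetric])
  finally show "m \<le> card {j\<in>A. b j \<ge> v}" by simp
qed

lemma kth_highest_eqI:
  assumes "finite A"
    and "card {j\<in>A. b j > v} < m" and "m \<le> card {j\<in>A. b j \<ge> v}"
  shows "kth_highest m A b = v"
proof (rule ccontr)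
  define w where "w = kth_highest m A b"
  have "card {j\<in>A. b j \<ge> v} \<le> card A" using assms(1) by (intro card_mono) auto
  then have "1 \<le> m" "m \<le> card A" using assms by linarith+
  note w_bounds = kth_highest_card_bounds[OF assms(1) this, of b, folded w_def]
  assume "w \<noteq> v"
  then consider "v < w" | "w < v" by linarith
  then show False
  proof cases
    case 1
    then have "card {j\<in>A. b j \<ge> w} \<le> card {j\<in>A. b j > v}"
      using assms(1) by (intro card_mono) auto
    then show False using assms w_bounds by linarith
  next
    case 2
    then have "card {j\<in>A. b j \<ge> v} \<le> card {j\<in>A. b j > w}"
      using assms(1) by (intro card_mono) auto
    then show False using assms w_bounds by linarith
  qed
qed

lemma kth_highest_eqI_sets:
  assumes "finite A" "finite P"
    and "{j\<in>A. b j > v} \<subseteq> P" "card P < m"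
    and "Q \<subseteq> {j\<in>A. b j \<ge> v}" "m \<le> card Q"
  shows "kth_highest m A b = v"
proof (rule kth_highest_eqI[OF assms(1)])
  show "card {j\<in>A. b j > v} < m" using card_mono[OF assms(2,3)] assms(4) by linarith
  show "m \<le> card {j\<in>A. b j \<ge> v}" using card_mono[OF _ assms(5)] assms(1,6) by fastforce
qed

lemma kth_highest_cong:
  assumes "finite A" "\<And>j. j \<in> A \<Longrightarrow> b j = b' j"
  shows "kth_highest m A b = kth_highest m A b'"
proof -
  have "map b (sorted_list_of_set A) = map b' (sorted_list_of_set A)"
    using assms by (intro map_cong) auto
  then show ?thesis unfolding kth_highest_def by (simp only:)
qed

lemma finite_users [simp]: "finite (users n)"
  unfolding users_def by simp

lemma card_users [simp]: "card (users n) = n"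
  unfolding users_def by simp

definition rank :: "nat \<Rightarrow> (nat \<Rightarrow> real) \<Rightarrow> nat \<Rightarrow> nat" where
  "rank n b i = card {j \<in> users n. b j > b i \<or> (b j = b i \<and> j < i)}"

lemma confirmed_eq_rank: "confirmed n k b = {i \<in> users n. rank n b i < k}"
  unfolding confirmed_def rank_def ..

lemma rank_less:
  assumes "j \<in> users n" "b j > b i \<or> (b j = b i \<and> j < i)"
  shows "rank n b j < rank n b i"
  unfolding rank_def using assms by (intro psubset_card_mono) auto

lemma bij_betw_rank: "bij_betw (rank n b) (users n) {..<n}"
proof -
  have "inj_on (rank n b) (users n)"
  proof (rule inj_onI)
    fix i j assume "i \<in> users n" "j \<in> users n" "rank n b i = rank n b j"
    then show "i = j" using rank_less[of i n b j] rank_less[of j n b i] by fastforce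
  qed
  moreover have "rank n b i < n" if "i \<in> users n" for i
  proof -
    have "rank n b i \<le> card (users n - {i})" unfolding rank_def by (intro card_mono) auto
    moreover have "1 \<le> n" using that by (simp add: users_def)
    ultimately show ?thesis using that by simp
  qed
  ultimately show ?thesis
    by (intro bij_betw_imageI card_subset_eq) (auto simp: card_image users_def)
qed

lemma card_confirmed:
  assumes "k \<le> n"
  shows "card (confirmed n k b) = k"
proof -
  have "inj_on (rank n b) (confirmed n k b)"
    using bij_betw_imp_inj_on[OF bij_betw_rank] unfolding confirmed_eq_rank
    by (rule inj_on_subset) auto
  moreover have "rank n b ` confirmed n k b = {..<k}"
  proof
    show "rank n b ` confirmed n k b \<subseteq> {..<k}" unfolding confirmed_eq_rank by auto
    show "{..<k} \<subseteq> rank n b ` confirmed n k b"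
    proof
      fix x assume "x \<in> {..<k}"
      then have "x \<in> rank n b ` users n"
        using bij_betw_imp_surj_on[OF bij_betw_rank] assms by auto
      then show "x \<in> rank n b ` confirmed n k b"
        using \<open>x \<in> {..<k}\<close> unfolding confirmed_eq_rank by auto
    qed
  qed
  ultimately show ?thesis by (metis card_image card_lessThan)
qed

lemma unconfirmed_bid_le_confirmed:
  assumes "i \<in> confirmed n k b" "j \<in> users n - confirmed n k b"
  shows "b j \<le> b i"
proof (rule ccontr)
  assume "\<not> b j \<le> b i"
  then have "rank n b j < rank n b i" using assms by (intro rank_less) auto
  then show False using assms unfolding confirmed_eq_rank by auto
qed

lemma sum_le_sum_of_dominating:
  fixes f :: "'a \<Rightarrow> 'b::linordered_idom"
  assumes "finite S" "finite C" "card S \<le> card C"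
    and dominates: "\<And>x y. x \<in> S - C \<Longrightarrow> y \<in> C - S \<Longrightarrow> f x \<le> f y"
    and nonneg: "\<And>y. y \<in> C - S \<Longrightarrow> 0 \<le> f y"
  shows "sum f S \<le> sum f C"
proof -
  have card_le: "card (S - C) \<le> card (C - S)"
    using assms(1-3) by (simp add: card_Diff_subset_Int Int_commute)
  have "sum f (S - C) \<le> sum f (C - S)"
  proof (cases "C - S = {}")
    case True
    then have "card (S - C) = 0" using card_le unfolding True by simp
    then have "S - C = {}" using assms(1) by (metis card_0_eq finite_Diff)
    then show ?thesis unfolding True by (simp only: sum.empty order_refl)
  next
    case False
    define m where "m = Min (f ` (C - S))"
    have m_le: "m \<le> f y" if "y \<in> C - S" for y
      unfolding m_def using assms(2) that by simp
    have "m \<in> f ` (C - S)" unfolding m_def using assms(2) False by (intro Min_in) auto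
    then obtain y0 where y0: "y0 \<in> C - S" "f y0 = m" by blast
    have le_m: "f x \<le> m" if "x \<in> S - C" for x
      using dominates[OF that y0(1)] y0(2) by simp
    have "sum f (S - C) \<le> of_nat (card (S - C)) * m"
      using le_m by (rule sum_bounded_above)
    also have "\<dots> \<le> of_nat (card (C - S)) * m"
      using card_le nonneg[OF y0(1)] y0(2) by (intro mult_right_mono) simp_all
    also have "\<dots> \<le> sum f (C - S)"
      using m_le by (rule sum_bounded_below)
    finally show ?thesis .
  qed
  then show ?thesis
    using sum.Int_Diff[OF assms(1), of f C] sum.Int_Diff[OF assms(2), of f S]
    by (simp add: Int_commute)
qed

lemma allocatively_efficient:
  assumes "k \<le> n"
  shows "allocatively_efficient n k"
  unfolding allocatively_efficient_def
proof (intro allI impI)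
  fix \<theta> S
  assume nonneg: "nonneg_profile n \<theta>" and S: "S \<subseteq> users n" "card S \<le> k"
  have C: "confirmed n k \<theta> \<subseteq> users n" unfolding confirmed_def by auto
  show "sum \<theta> S \<le> sum \<theta> (confirmed n k \<theta>)"
  proof (rule sum_le_sum_of_dominating)
    show "finite S" "finite (confirmed n k \<theta>)"
      using S(1) C by (auto intro: finite_subset)
    show "card S \<le> card (confirmed n k \<theta>)" using S(2) card_confirmed[OF assms] by simp
    show "\<theta> x \<le> \<theta> y" if "x \<in> S - confirmed n k \<theta>" "y \<in> confirmed n k \<theta> - S" for x y
      using that S(1) by (intro unconfirmed_bid_le_confirmed) auto
    show "0 \<le> \<theta> y" if "y \<in> confirmed n k \<theta> - S" for y
      using that C nonneg unfolding nonneg_profile_def by auto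
  qed
qed

definition critical_bid :: "nat \<Rightarrow> nat \<Rightarrow> (nat \<Rightarrow> real) \<Rightarrow> nat \<Rightarrow> real" where
  "critical_bid n k b i = kth_highest k (users n - {i}) b"

lemma rtfrm_rebate_eq_critical_bid: "rtfrm_rebate n k b i = real k / real n * critical_bid n k b i"
  unfolding rtfrm_rebate_def critical_bid_def ..

lemma critical_bid_fun_upd: "critical_bid n k (b(i := x)) i = critical_bid n k b i"
  unfolding critical_bid_def by (rule kth_highest_cong) auto

lemma critical_bid_card_bounds:
  assumes "i \<in> users n" "1 \<le> k" "k < n"
  shows "card {j \<in> users n - {i}. b j > critical_bid n k b i} < k"
    and "k \<le> card {j \<in> users n - {i}. b j \<ge> critical_bid n k b i}"
  using kth_highest_card_bounds[of "users n - {i}" k b] assms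
  by (simp_all add: critical_bid_def)

lemma critical_bid_nonneg:
  assumes "nonneg_profile n b" "i \<in> users n" "1 \<le> k" "k < n"
  shows "0 \<le> critical_bid n k b i"
proof -
  have "critical_bid n k b i \<in> b ` (users n - {i})"
    unfolding critical_bid_def using assms by (intro kth_highest_in_image) simp_all
  then show ?thesis using assms(1) unfolding nonneg_profile_def by auto
qed

lemma critical_bid_le_bid_if_confirmed:
  assumes "i \<in> confirmed n k b" "1 \<le> k" "k < n"
  shows "critical_bid n k b i \<le> b i"
proof (rule ccontr)
  have i: "i \<in> users n" using assms(1) unfolding confirmed_def by simp
  assume "\<not> critical_bid n k b i \<le> b i"
  then have "{j \<in> users n - {i}. b j \<ge> critical_bid n k b i}
      \<subseteq> {j \<in> users n. b j > b i \<or> (b j = b i \<and> j < i)}" by auto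
  then have "card {j \<in> users n - {i}. b j \<ge> critical_bid n k b i} \<le> rank n b i"
    unfolding rank_def by (intro card_mono) auto
  then show False
    using critical_bid_card_bounds(2)[OF i assms(2,3), where b = b] assms(1)
    unfolding confirmed_eq_rank by simp
qed

lemma bid_le_critical_bid_if_unconfirmed:
  assumes "i \<in> users n" "i \<notin> confirmed n k b" "1 \<le> k" "k < n"
  shows "b i \<le> critical_bid n k b i"
proof (rule ccontr)
  assume "\<not> b i \<le> critical_bid n k b i"
  then have "{j \<in> users n. b j > b i \<or> (b j = b i \<and> j < i)}
      \<subseteq> {j \<in> users n - {i}. b j > critical_bid n k b i}" by auto
  then have "rank n b i \<le> card {j \<in> users n - {i}. b j > critical_bid n k b i}"
    unfolding rank_def by (intro card_mono) auto
  then show False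
    using critical_bid_card_bounds(1)[OF assms(1,3,4), where b = b] assms(1,2)
    unfolding confirmed_eq_rank by simp
qed

(* Adding the confirmed user i back to the others moves their k-th highest bid to position k + 1. *)
lemma vcg_price_eq_critical_bid:
  assumes "i \<in> confirmed n k b" "1 \<le> k" "k < n"
  shows "vcg_price n k b = critical_bid n k b i"
proof -
  define p where "p = critical_bid n k b i"
  have i: "i \<in> users n" using assms(1) unfolding confirmed_def by simp
  note p_bounds = critical_bid_card_bounds[OF i assms(2,3), of b, folded p_def]
  have p_le: "p \<le> b i" unfolding p_def by (rule critical_bid_le_bid_if_confirmed[OF assms])
  show ?thesis unfolding vcg_price_def p_def[symmetric]
  proof (rule kth_highest_eqI_sets)
    show "{j \<in> users n. b j > p} \<subseteq> insert i {j \<in> users n - {i}. b j > p}" by auto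
    show "card (insert i {j \<in> users n - {i}. b j > p}) < k + 1" using p_bounds(1) by simp
    show "insert i {j \<in> users n - {i}. b j \<ge> p} \<subseteq> {j \<in> users n. b j \<ge> p}" using i p_le by auto
    show "k + 1 \<le> card (insert i {j \<in> users n - {i}. b j \<ge> p})" using p_bounds(2) by simp
  qed simp_all
qed

lemma finite_set_pmf_coins: "finite (set_pmf (coins n \<alpha>))"
  unfolding coins_def users_def by (subst set_Pi_pmf) (auto intro!: finite_PiE_dflt)

lemma integrable_coins [simp]: "integrable (measure_pmf (coins n \<alpha>)) (f :: _ \<Rightarrow> real)"
  by (rule integrable_measure_pmf_finite[OF finite_set_pmf_coins])

lemma expectation_coin:
  assumes "i \<in> users n" "0 \<le> \<alpha>" "\<alpha> \<le> 1"
  shows "measure_pmf.expectation (coins n \<alpha>) (\<lambda>c. if c i then r else 0) = \<alpha> * r"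
proof -
  have "measure_pmf.expectation (coins n \<alpha>) (\<lambda>c. (\<lambda>x. if x then r else 0) (c i)) =
        measure_pmf.expectation (map_pmf (\<lambda>c. c i) (coins n \<alpha>)) (\<lambda>x. if x then r else (0::real))"
    by simp
  also have "map_pmf (\<lambda>c. c i) (coins n \<alpha>) = bernoulli_pmf \<alpha>"
    unfolding coins_def using assms(1) by (subst Pi_pmf_component) (auto simp: users_def)
  finally show ?thesis using assms(2,3) by simp
qed

lemma expectation_sum_rebate:
  assumes "I \<subseteq> users n" "0 \<le> \<alpha>" "\<alpha> \<le> 1"
  shows "measure_pmf.expectation (coins n \<alpha>) (\<lambda>c. \<Sum>i\<in>I. rebate n k b c i)
      = \<alpha> * (real k / real n) * (\<Sum>i\<in>I. critical_bid n k b i)"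
proof -
  have "measure_pmf.expectation (coins n \<alpha>) (\<lambda>c. \<Sum>i\<in>I. rebate n k b c i)
      = (\<Sum>i\<in>I. measure_pmf.expectation (coins n \<alpha>) (\<lambda>c. rebate n k b c i))"
    by (rule Bochner_Integration.integral_sum) simp
  also have "\<dots> = (\<Sum>i\<in>I. \<alpha> * (real k / real n) * critical_bid n k b i)"
    using assms expectation_coin unfolding rebate_def rtfrm_rebate_eq_critical_bid
    by (intro sum.cong) auto
  finally show ?thesis by (simp add: sum_distrib_left)
qed

lemma utility_eq:
  "utility n k \<theta> b c i = (if i \<in> confirmed n k b then \<theta> i - vcg_price n k b else 0) + rebate n k b c i"
  unfolding utility_def payment_def by simp

lemma expected_utility_eq:
  assumes "i \<in> users n" "1 \<le> k" "k < n" "0 \<le> \<alpha>" "\<alpha> \<le> 1"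
  shows "expected_utility n k \<alpha> \<theta> b i
      = (if i \<in> confirmed n k b then \<theta> i - critical_bid n k b i else 0)
        + \<alpha> * rtfrm_rebate n k b i"
proof -
  have "expected_utility n k \<alpha> \<theta> b i
      = (if i \<in> confirmed n k b then \<theta> i - vcg_price n k b else 0)
        + measure_pmf.expectation (coins n \<alpha>) (\<lambda>c. rebate n k b c i)"
    unfolding expected_utility_def utility_eq by (subst Bochner_Integration.integral_add) simp_all
  also have "measure_pmf.expectation (coins n \<alpha>) (\<lambda>c. rebate n k b c i) = \<alpha> * rtfrm_rebate n k b i"
    unfolding rebate_def by (rule expectation_coin[OF assms(1,4,5)])
  finally show ?thesis using vcg_price_eq_critical_bid[OF _ assms(2,3)] by simp
qed

lemma restricted_UIC_exp:
  assumes "1 \<le> k" "k < n" "0 \<le> \<alpha>" "\<alpha> \<le> 1"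
  shows "restricted_UIC_exp n k \<alpha>"
  unfolding restricted_UIC_exp_def
proof (intro allI impI)
  fix \<theta> b :: "nat \<Rightarrow> real" and i b'
  assume i: "i \<in> users n"
  define p where "p = critical_bid n k b i"
  have truthful_gain: "(if i \<in> confirmed n k (b(i := \<theta> i)) then \<theta> i - p else 0) = max (\<theta> i - p) 0"
  proof (cases "i \<in> confirmed n k (b(i := \<theta> i))")
    case True
    have "p \<le> \<theta> i"
      using critical_bid_le_bid_if_confirmed[OF True assms(1,2)]
      unfolding p_def critical_bid_fun_upd by simp
    with True show ?thesis by simp
  next
    case False
    have "\<theta> i \<le> p"
      using bid_le_critical_bid_if_unconfirmed[OF i False assms(1,2)]
      unfolding p_def critical_bid_fun_upd by simp
    with False show ?thesis by simp
  qed
  show "expected_utility n k \<alpha> \<theta> (b(i := b')) i \<le> expected_utility n k \<alpha> \<theta> (b(i := \<theta> i)) i"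
    unfolding expected_utility_eq[OF i assms] rtfrm_rebate_eq_critical_bid critical_bid_fun_upd
      p_def[symmetric] truthful_gain
    by simp
qed

lemma IR_users:
  assumes "1 \<le> k" "k < n"
  shows "IR_users n k"
  unfolding IR_users_def
proof (intro allI impI)
  fix \<theta> c i
  assume nonneg: "nonneg_profile n \<theta>" and i: "i \<in> users n"
  have "0 \<le> rebate n k \<theta> c i"
    using critical_bid_nonneg[OF nonneg i assms]
    by (simp add: rebate_def rtfrm_rebate_eq_critical_bid)
  moreover have "vcg_price n k \<theta> \<le> \<theta> i" if "i \<in> confirmed n k \<theta>"
    using vcg_price_eq_critical_bid[OF that assms] critical_bid_le_bid_if_confirmed[OF that assms]
    by simp
  ultimately show "0 \<le> utility n k \<theta> \<theta> c i" unfolding utility_eq by auto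
qed

lemma less_if_bid_greater_antimono:
  fixes b :: "nat \<Rightarrow> 'a::linorder"
  assumes "antimono_on (users n) b" "i \<in> users n" "j \<in> users n" "b j > b i"
  shows "j < i"
proof (rule ccontr)
  assume "\<not> j < i"
  then have "b j \<le> b i" using monotone_onD[OF assms(1) assms(2,3)] by simp
  then show False using assms(4) by simp
qed

lemma bid_le_if_index_le_antimono:
  fixes b :: "nat \<Rightarrow> 'a::linorder"
  assumes "antimono_on (users n) b" "i \<in> users n" "1 \<le> j" "j \<le> i"
  shows "b i \<le> b j"
  using monotone_onD[OF assms(1) _ assms(2)] assms(2-4) unfolding users_def by simp

lemma rank_antimono:
  assumes "antimono_on (users n) b" "i \<in> users n"
  shows "rank n b i = i - 1"
proof -
  have "{j \<in> users n. b j > b i \<or> (b j = b i \<and> j < i)} = {1..<i}"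
    using less_if_bid_greater_antimono[OF assms(1,2)] bid_le_if_index_le_antimono[OF assms]
      assms(2) unfolding users_def by fastforce
  then show ?thesis unfolding rank_def by simp
qed

lemma confirmed_antimono:
  assumes "antimono_on (users n) b" "k \<le> n"
  shows "confirmed n k b = {1..k}"
  using assms rank_antimono[OF assms(1)] unfolding confirmed_eq_rank users_def by auto

lemma kth_highest_users_antimono:
  assumes "antimono_on (users n) b" "1 \<le> m" "m \<le> n"
  shows "kth_highest m (users n) b = b m"
proof (rule kth_highest_eqI_sets[where P = "{1..<m}" and Q = "{1..m}"])
  have m: "m \<in> users n" using assms unfolding users_def by simp
  show "{j \<in> users n. b j > b m} \<subseteq> {1..<m}"
    using less_if_bid_greater_antimono[OF assms(1) m] unfolding users_def by auto
  show "{1..m} \<subseteq> {j \<in> users n. b j \<ge> b m}"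
    using bid_le_if_index_le_antimono[OF assms(1) m] assms(3) unfolding users_def by auto
qed (use assms in simp_all)

lemma critical_bid_antimono:
  assumes "antimono_on (users n) b" "i \<in> users n" "1 \<le> k" "k < n"
  shows "critical_bid n k b i = (if i \<le> k then b (k + 1) else b k)"
proof (cases "i \<le> k")
  case True
  have k1: "k + 1 \<in> users n" using assms unfolding users_def by simp
  have "kth_highest k (users n - {i}) b = b (k + 1)"
  proof (rule kth_highest_eqI_sets[where P = "{1..k} - {i}" and Q = "{1..k+1} - {i}"])
    show "{j \<in> users n - {i}. b j > b (k + 1)} \<subseteq> {1..k} - {i}"
      using less_if_bid_greater_antimono[OF assms(1) k1] unfolding users_def by fastforce
    show "{1..k+1} - {i} \<subseteq> {j \<in> users n - {i}. b j \<ge> b (k + 1)}"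
      using bid_le_if_index_le_antimono[OF assms(1) k1] assms(4) unfolding users_def by auto
  qed (use True assms in \<open>simp_all add: users_def\<close>)
  then show ?thesis using True unfolding critical_bid_def by simp
next
  case False
  have k: "k \<in> users n" using assms unfolding users_def by simp
  have "kth_highest k (users n - {i}) b = b k"
  proof (rule kth_highest_eqI_sets[where P = "{1..<k}" and Q = "{1..k}"])
    show "{j \<in> users n - {i}. b j > b k} \<subseteq> {1..<k}"
      using less_if_bid_greater_antimono[OF assms(1) k] unfolding users_def by fastforce
    show "{1..k} \<subseteq> {j \<in> users n - {i}. b j \<ge> b k}"
      using bid_le_if_index_le_antimono[OF assms(1) k] assms(4) False unfolding users_def by auto
  qed (use assms in simp_all)
  then show ?thesis using False unfolding critical_bid_def by simp
qed

lemma sum_critical_bid_antimono: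
  assumes "antimono_on (users n) b" "1 \<le> k" "k < n"
  shows "(\<Sum>i\<in>{1..k}. critical_bid n k b i) = real k * b (k + 1)"
    and "(\<Sum>i\<in>{k+1..n}. critical_bid n k b i) = real (n - k) * b k"
proof -
  have "(\<Sum>i\<in>{1..k}. critical_bid n k b i) = (\<Sum>i\<in>{1..k}. b (k + 1))"
    using critical_bid_antimono[OF assms(1) _ assms(2,3)] assms(3)
    by (intro sum.cong) (auto simp: users_def)
  then show "(\<Sum>i\<in>{1..k}. critical_bid n k b i) = real k * b (k + 1)" by simp
  have "(\<Sum>i\<in>{k+1..n}. critical_bid n k b i) = (\<Sum>i\<in>{k+1..n}. b k)"
    using critical_bid_antimono[OF assms(1) _ assms(2,3)]
    by (intro sum.cong) (auto simp: users_def)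
  then show "(\<Sum>i\<in>{k+1..n}. critical_bid n k b i) = real (n - k) * b k"
    using assms(3) by (simp add: of_nat_diff)
qed

lemma expected_redistribution_fraction_antimono:
  assumes "antimono_on (users n) b" "1 \<le> k" "k < n" "0 \<le> \<alpha>" "\<alpha> \<le> 1" "b (k + 1) > 0"
  shows "expected_redistribution_fraction n k \<alpha> b = \<alpha> * (real k / real n)"
proof -
  have "{1..k} \<subseteq> users n" using assms(3) unfolding users_def by auto
  then have "measure_pmf.expectation (coins n \<alpha>) (\<lambda>c. \<Sum>i\<in>confirmed n k b. rebate n k b c i)
      = \<alpha> * (real k / real n) * (real k * b (k + 1))"
    unfolding confirmed_antimono[OF assms(1) less_imp_le[OF assms(3)]]
    using expectation_sum_rebate assms(4,5) sum_critical_bid_antimono(1)[OF assms(1-3)] by simp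
  moreover have "vcg_price n k b = b (k + 1)"
    unfolding vcg_price_def using assms(1,3) by (intro kth_highest_users_antimono) simp_all
  ultimately show ?thesis
    unfolding expected_redistribution_fraction_def using assms(2,6) by simp
qed

lemma IR_miner_exp_antimono:
  assumes "antimono_on (users n) b" "1 \<le> k" "k < n" "0 \<le> \<alpha>" "\<alpha> \<le> 1" "b (k + 1) > 0"
    and "\<alpha> \<le> real n / (real k + real (n - k) * (b k / b (k + 1)))"
  shows "IR_miner_exp n k \<alpha> b"
proof -
  define D where "D = real k + real (n - k) * (b k / b (k + 1))"
  have "b (k + 1) \<le> b k"
    using assms(2,3) by (intro bid_le_if_index_le_antimono[OF assms(1)]) (simp_all add: users_def)
  then have "D > 0" unfolding D_def using assms(2,6) by (simp add: add_pos_nonneg)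
  then have "\<alpha> * D \<le> real n" using assms(7) unfolding D_def[symmetric] by (simp add: le_divide_eq)
  have "users n = {1..k} \<union> {k+1..n}" using assms(3) unfolding users_def by auto
  then have "(\<Sum>i\<in>users n. critical_bid n k b i) = real k * b (k + 1) + real (n - k) * b k"
    using sum_critical_bid_antimono[OF assms(1-3)] by (simp add: sum.union_disjoint)
  then have "measure_pmf.expectation (coins n \<alpha>) (\<lambda>c. \<Sum>i\<in>users n. rebate n k b c i)
      = \<alpha> * (real k / real n) * (real k * b (k + 1) + real (n - k) * b k)"
    by (simp add: expectation_sum_rebate[OF order_refl assms(4,5)])
  also have "\<dots> = (\<alpha> * D) * (real k * b (k + 1) / real n)"
    unfolding D_def using assms(3,6) by (simp add: field_simps)
  also have "\<dots> \<le> real n * (real k * b (k + 1) / real n)"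
    using \<open>\<alpha> * D \<le> real n\<close> assms(6) by (intro mult_right_mono) simp_all
  also have "\<dots> = real k * vcg_price n k b"
    unfolding vcg_price_def using assms(1-3) by (simp add: kth_highest_users_antimono)
  finally show ?thesis unfolding IR_miner_exp_def .
qed

theorem theorem6:
  fixes n k :: nat and b :: "nat \<Rightarrow> real" and \<alpha> :: real
  assumes "1 \<le> k" and "k + 2 \<le> n"
    and sorted: "\<forall>i j. 1 \<le> i \<longrightarrow> i \<le> j \<longrightarrow> j \<le> n \<longrightarrow> b j \<le> b i"
    and nonneg: "0 \<le> b n"
    and pos: "b (k + 1) > 0"
    and "0 < \<alpha>" and "\<alpha> < 1"
  shows "expected_redistribution_fraction n k \<alpha> b = \<alpha> * (real k / real n)
     \<and> allocatively_efficient n k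
     \<and> restricted_UIC_exp n k \<alpha>
     \<and> IR_users n k
     \<and> (\<alpha> \<le> real n / (real k + real (n - k) * (b k / b (k + 1))) \<longrightarrow> IR_miner_exp n k \<alpha> b)"
proof -
  have k: "1 \<le> k" "k < n" using assms(1,2) by simp_all
  have \<alpha>: "0 \<le> \<alpha>" "\<alpha> \<le> 1" using assms(6,7) by simp_all
  have antimono: "antimono_on (users n) b"
    using sorted unfolding users_def by (intro monotone_onI) auto
  show ?thesis
    using expected_redistribution_fraction_antimono[OF antimono k \<alpha> pos]
      allocatively_efficient[OF less_imp_le[OF k(2)]] restricted_UIC_exp[OF k \<alpha>] IR_users[OF k]
      IR_miner_exp_antimono[OF antimono k \<alpha> pos]
    by blast
qed

end
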